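(* Let $\mathcal{R}^{rsc}$ be a rich single-crossing domain and $F:\mathcal{R}^{rsc}\to\mathbb{Z}$ strategy-proof. Then the indirect preference correspondence $V^F$ is continuous: for every $R\in\mathcal{R}^{rsc}$ and every monotone sequence $\{R^n\}$ in $\mathcal{R}^{rsc}$ converging to $R$ in the order topology, the sequence $\{F(R^n)\}$ converges in $\mathbb{Z}$ and $\lim_n F(R^n)\;I\;F(R)$, where $I$ is the indifference relation of $R$. The same holds for mechanisms defined on a closed interval $[\underline R,\overline R]\subseteq\mathcal{R}^{rsc}$.
   Context: $\mathbb{Z}=[0,\infty)\times[0,1]$ with the Euclidean topology; $(t',q')<(t'',q'')$ means $t'<t''$, $q'<q''$; $x\le y$ means $x=y$ or $x<y$; $\square(z)=\{x:x\le z\}$. A classical preference is a complete transitive relation $R$ on $\mathbb{Z}$ (strict part $P$, indifference $I$) strictly decreasing in $t$ for fixed $q$, strictly increasing in $q$ for fixed $t$, with closed upper and lower contour sets. Distinct classical preferences satisfy single-crossing if any indifference set of one meets any indifference set of the other in at most one point. A rich single-crossing domain $\mathcal{R}^{rsc}$ is a set of pairwise single-crossing classical preferences such that for all $x'<x''$ some member is indifferent between them. For distinct members, $R'\prec R''$ means $\square(z)\cap\{x:xR''z\}\subseteq\square(z)\cap\{x:xR'z\}$ for all $z$; $\prec$ is a linear order and $\mathcal{R}^{rsc}$ has its order topology. A sequence is monotone if $R^n\precsim R^{n+1}$ for all $n$ or $R^{n+1}\precsim R^n$ for all $n$ ($\precsim$ means $\prec$ or $=$). A mechanism $F$ maps the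 domain to $\mathbb{Z}$ and is strategy-proof if $F(R')R'F(R'')$ for all $R',R''$. Its indirect preference correspondence is $V^F(R)=\{z\in\mathbb{Z}: z\,I\,F(R)\}$. *)

theory Defs
  imports "HOL-Analysis.Analysis"
begin

type_synonym alloc = "real \<times> real"
type_synonym pref = "alloc \<Rightarrow> alloc \<Rightarrow> bool"

definition Zset :: "alloc set" where
  "Zset = {(t, q). 0 \<le> t \<and> 0 \<le> q \<and> q \<le> 1}"

definition zless :: "alloc \<Rightarrow> alloc \<Rightarrow> bool" where
  "zless x y \<longleftrightarrow> fst x < fst y \<and> snd x < snd y"

definition zle :: "alloc \<Rightarrow> alloc \<Rightarrow> bool" where
  "zle x y \<longleftrightarrow> x = y \<or> zless x y"

definition box :: "alloc \<Rightarrow> alloc set" where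
  "box z = {x \<in> Zset. zle x z}"

definition strict :: "pref \<Rightarrow> alloc \<Rightarrow> alloc \<Rightarrow> bool" where
  "strict R x y \<longleftrightarrow> R x y \<and> \<not> R y x"

definition indiff :: "pref \<Rightarrow> alloc \<Rightarrow> alloc \<Rightarrow> bool" where
  "indiff R x y \<longleftrightarrow> R x y \<and> R y x"

definition classical :: "pref \<Rightarrow> bool" where
  "classical R \<longleftrightarrow>
     (\<forall>x y. R x y \<longrightarrow> x \<in> Zset \<and> y \<in> Zset) \<and>
     (\<forall>x\<in>Zset. \<forall>y\<in>Zset. R x y \<or> R y x) \<and>
     (\<forall>x\<in>Zset. \<forall>y\<in>Zset. \<forall>w\<in>Zset. R x y \<longrightarrow> R y w \<longrightarrow> R x w) \<and>
     (\<forall>t1 t2 q. (t1, q) \<in> Zset \<longrightarrow> (t2, q) \<in> Zset \<longrightarrow> t1 < t2 \<longrightarrow> strict R (t1, q) (t2, q)) \<and>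
     (\<forall>t q1 q2. (t, q1) \<in> Zset \<longrightarrow> (t, q2) \<in> Zset \<longrightarrow> q1 < q2 \<longrightarrow> strict R (t, q2) (t, q1)) \<and>
     (\<forall>z\<in>Zset. closedin (top_of_set Zset) {x \<in> Zset. R x z} \<and>
                closedin (top_of_set Zset) {x \<in> Zset. R z x})"

definition indiff_set :: "pref \<Rightarrow> alloc \<Rightarrow> alloc set" where
  "indiff_set R z = {x \<in> Zset. indiff R x z}"

definition single_crossing :: "pref \<Rightarrow> pref \<Rightarrow> bool" where
  "single_crossing R1 R2 \<longleftrightarrow>
     (\<forall>z1\<in>Zset. \<forall>z2\<in>Zset. \<forall>x y. x \<in> indiff_set R1 z1 \<inter> indiff_set R2 z2 \<longrightarrow>
                                 y \<in> indiff_set R1 z1 \<inter> indiff_set R2 z2 \<longrightarrow> x = y)"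

definition rich_single_crossing :: "pref set \<Rightarrow> bool" where
  "rich_single_crossing D \<longleftrightarrow>
     (\<forall>R\<in>D. classical R) \<and>
     (\<forall>R1\<in>D. \<forall>R2\<in>D. R1 \<noteq> R2 \<longrightarrow> single_crossing R1 R2) \<and>
     (\<forall>x1\<in>Zset. \<forall>x2\<in>Zset. zless x1 x2 \<longrightarrow> (\<exists>R\<in>D. indiff R x1 x2))"

definition prec :: "pref \<Rightarrow> pref \<Rightarrow> bool" where
  "prec R1 R2 \<longleftrightarrow> R1 \<noteq> R2 \<and>
     (\<forall>z\<in>Zset. box z \<inter> {x. R2 x z} \<subseteq> box z \<inter> {x. R1 x z})"

definition preceq :: "pref \<Rightarrow> pref \<Rightarrow> bool" where
  "preceq R1 R2 \<longleftrightarrow> prec R1 R2 \<or> R1 = R2"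

definition order_top :: "pref set \<Rightarrow> pref topology" where
  "order_top D = subtopology
     (topology_generated_by ({{R \<in> D. prec R a} | a. a \<in> D} \<union> {{R \<in> D. prec a R} | a. a \<in> D})) D"

definition monotone_seq :: "(nat \<Rightarrow> pref) \<Rightarrow> bool" where
  "monotone_seq Rs \<longleftrightarrow> (\<forall>n. preceq (Rs n) (Rs (Suc n))) \<or> (\<forall>n. preceq (Rs (Suc n)) (Rs n))"

definition strategy_proof :: "pref set \<Rightarrow> (pref \<Rightarrow> alloc) \<Rightarrow> bool" where
  "strategy_proof D F \<longleftrightarrow> (\<forall>R1\<in>D. \<forall>R2\<in>D. R1 (F R1) (F R2))"

definition mechanism :: "pref set \<Rightarrow> (pref \<Rightarrow> alloc) \<Rightarrow> bool" where
  "mechanism D F \<longleftrightarrow> (\<forall>R\<in>D. F R \<in> Zset)"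

definition indirect_pref :: "(pref \<Rightarrow> alloc) \<Rightarrow> pref \<Rightarrow> alloc set" where
  "indirect_pref F R = {z \<in> Zset. indiff R z (F R)}"

definition V_continuous :: "pref set \<Rightarrow> pref set \<Rightarrow> (pref \<Rightarrow> alloc) \<Rightarrow> bool" where
  "V_continuous D E F \<longleftrightarrow>
     (\<forall>R\<in>E. \<forall>Rs. (\<forall>n. Rs n \<in> E) \<longrightarrow> monotone_seq Rs \<longrightarrow>
        limitin (subtopology (order_top D) E) Rs R sequentially \<longrightarrow>
        (\<exists>L. ((\<lambda>n. F (Rs n)) \<longlongrightarrow> L) sequentially \<and> L \<in> indirect_pref F R))"

definition interval :: "pref set \<Rightarrow> pref \<Rightarrow> pref \<Rightarrow> pref set" where
  "interval D Rlo Rhi = {R \<in> D. preceq Rlo R \<and> preceq R Rhi}"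

end

theory Submission
  imports Defs
begin

text \<open>Single crossing linearly orders the domain: for b-indifferent bundles x < z, the a-ranking
  of x and z cannot change along a connected family of such pairs, since where it changed, x
  would lie on the a- and the b-indifference curve through z at once. Strategy-proofness then
  makes outcomes monotone in the type, so along a monotone sequence of types R^n the outcomes
  converge to some L, and R weakly prefers F R to L because preferences are closed. Conversely,
  if R strictly preferred F R to L, richness would supply a type a indifferent between F R and
  a bundle near L; by convergence in the order topology a eventually compares with R^n as it
  compares with R, and transferring the preferences of R^n to a contradicts that indifference.\<close>

section \<open>Classical preferences\<close>

lemma Zset_iff: "x \<in> Zset \<longleftrightarrow> 0 \<le> fst x \<and> 0 \<le> snd x \<and> snd x \<le> 1"
  by (cases x) (simp add: Zset_def)

lemma Zset_eq: "Zset = {0..} \<times> {0..1::real}"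
  by (auto simp: Zset_def)

lemma closed_Zset: "closed Zset"
  unfolding Zset_eq by (intro closed_Times closed_atLeast closed_atLeastAtMost)

lemma convex_Zset: "convex Zset"
  unfolding Zset_eq by (intro convex_Times convex_real_interval)

lemma classical_Zset: "classical R \<Longrightarrow> R x y \<Longrightarrow> x \<in> Zset \<and> y \<in> Zset"
  unfolding classical_def by (elim conjE) blast

lemma classical_total: "classical R \<Longrightarrow> x \<in> Zset \<Longrightarrow> y \<in> Zset \<Longrightarrow> R x y \<or> R y x"
  unfolding classical_def by (elim conjE) blast

lemma classical_trans:
  assumes R: "classical R" and "R x y" "R y w"
  shows "R x w"
proof -
  have "x \<in> Zset" "y \<in> Zset" "w \<in> Zset"
    using classical_Zset[OF R] assms(2,3) by blast+
  with R assms(2,3) show ?thesis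
    unfolding classical_def by (elim conjE) blast
qed

lemma classical_refl: "classical R \<Longrightarrow> x \<in> Zset \<Longrightarrow> R x x"
  using classical_total by blast

lemma classical_strict_fst:
  "classical R \<Longrightarrow> (t1, q) \<in> Zset \<Longrightarrow> (t2, q) \<in> Zset \<Longrightarrow> t1 < t2 \<Longrightarrow> strict R (t1, q) (t2, q)"
  unfolding classical_def by (elim conjE) blast

lemma classical_strict_snd:
  "classical R \<Longrightarrow> (t, q1) \<in> Zset \<Longrightarrow> (t, q2) \<in> Zset \<Longrightarrow> q1 < q2 \<Longrightarrow> strict R (t, q2) (t, q1)"
  unfolding classical_def by (elim conjE) blast

lemma classical_closedin_contours:
  assumes "classical R" "z \<in> Zset"
  shows "closedin (top_of_set Zset) {x \<in> Zset. R x z}" "closedin (top_of_set Zset) {x \<in> Zset. R z x}"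
  using assms unfolding classical_def by (elim conjE; blast)+

lemma strict_if_dominates:
  assumes R: "classical R" and Z: "x \<in> Zset" "y \<in> Zset"
    and le: "fst x \<le> fst y" "snd y \<le> snd x" and ne: "x \<noteq> y"
  shows "strict R x y"
proof -
  obtain tx qx ty qy where xy: "x = (tx, qx)" "y = (ty, qy)" by fastforce
  have mZ: "(tx, qy) \<in> Zset" using Z le xy by (simp add: Zset_iff)
  have xm: "R x (tx, qy)" "qy < qx \<Longrightarrow> \<not> R (tx, qy) x"
    using classical_strict_snd[OF R mZ, of qx] classical_refl[OF R mZ] Z le xy
    unfolding strict_def by (cases "qy < qx"; force)+
  have my: "R (tx, qy) y" "tx < ty \<Longrightarrow> \<not> R y (tx, qy)"
    using classical_strict_fst[OF R mZ, of ty] classical_refl[OF R mZ] Z le xy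
    unfolding strict_def by (cases "tx < ty"; force)+
  have "qy < qx \<or> tx < ty"
    using le ne xy by auto
  then show ?thesis
    using xm my classical_trans[OF R] unfolding strict_def by blast
qed

lemma pref_if_dominates:
  assumes "classical R" "x \<in> Zset" "y \<in> Zset" "fst x \<le> fst y" "snd y \<le> snd x"
  shows "R x y"
  using assms strict_if_dominates[OF assms] classical_refl[OF assms(1,2)]
  unfolding strict_def by blast

lemma pref_fst_le:
  assumes R: "classical R" and xy: "R x y" and q: "snd x \<le> snd y"
  shows "fst x \<le> fst y"
proof (rule ccontr)
  assume "\<not> fst x \<le> fst y"
  then have "strict R y x"
    using strict_if_dominates[OF R _ _ _ q] classical_Zset[OF R xy] by auto
  with xy show False unfolding strict_def by blast
qed

lemma pref_fst_less:
  assumes R: "classical R" and xy: "R x y" and q: "snd x < snd y"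
  shows "fst x < fst y"
proof (rule ccontr)
  assume "\<not> fst x < fst y"
  then have "strict R y x"
    using strict_if_dominates[OF R _ _ _ less_imp_le[OF q]] classical_Zset[OF R xy] q by auto
  with xy show False unfolding strict_def by blast
qed

lemma classical_strict_contours_openin:
  assumes "classical R" "z \<in> Zset"
  shows "openin (top_of_set Zset) {x \<in> Zset. \<not> R x z}"
    and "openin (top_of_set Zset) {x \<in> Zset. \<not> R z x}"
proof -
  have "{x \<in> Zset. \<not> R x z} = Zset - {x \<in> Zset. R x z}"
    and "{x \<in> Zset. \<not> R z x} = Zset - {x \<in> Zset. R z x}"
    by auto
  then show "openin (top_of_set Zset) {x \<in> Zset. \<not> R x z}"
    and "openin (top_of_set Zset) {x \<in> Zset. \<not> R z x}"
    using classical_closedin_contours[OF assms] by (simp_all add: openin_diff)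
qed

lemma eventually_in_openin_Zset:
  assumes "openin (top_of_set Zset) U" "x \<in> U" "xs \<longlonglongrightarrow> x" "\<And>n. xs n \<in> Zset"
  shows "eventually (\<lambda>n. xs n \<in> U) sequentially"
proof -
  obtain V where V: "open V" "U = Zset \<inter> V"
    using assms(1) openin_open by metis
  then have "eventually (\<lambda>n. xs n \<in> V) sequentially"
    using assms(2,3) topological_tendstoD by blast
  then show ?thesis
    using V assms(4) by (simp add: eventually_mono)
qed

text \<open>Strict preference is dense because Zset is connected: if nothing lay strictly between
  x and y, the bundles strictly preferred to x would be exactly those weakly preferred to y,
  a nonempty proper clopen subset of Zset.\<close>
lemma classical_strict_dense:
  assumes R: "classical R" and xZ: "x \<in> Zset" and yZ: "y \<in> Zset" and nxy: "\<not> R x y"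
  obtains w where "w \<in> Zset" "\<not> R w y" "\<not> R x w"
proof (rule ccontr)
  assume "\<not> thesis"
  then have gap: "\<forall>w\<in>Zset. R w y \<or> R x w"
    using that by blast
  define U where "U = {u \<in> Zset. \<not> R x u}"
  have U_alt: "U = {u \<in> Zset. R u y}"
    unfolding U_def using gap nxy classical_trans[OF R] by blast
  have "openin (top_of_set Zset) U"
    unfolding U_def by (rule classical_strict_contours_openin(2)[OF R xZ])
  moreover have "closedin (top_of_set Zset) U"
    unfolding U_alt by (rule classical_closedin_contours(1)[OF R yZ])
  ultimately have "U = {} \<or> U = Zset"
    using convex_connected[OF convex_Zset] connected_clopen by blast
  moreover have "y \<in> U"
    using U_alt yZ classical_refl[OF R yZ] by simp
  moreover have "x \<notin> U"
    using U_def classical_refl[OF R xZ] by simp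
  ultimately show False
    using xZ by blast
qed

lemma classical_graph_closed:
  assumes R: "classical R"
  shows "closed {p. R (fst p) (snd p)}"
  unfolding closed_sequential_limits
proof (intro allI impI, elim conjE)
  fix s and p :: "alloc \<times> alloc"
  assume s: "\<forall>n. s n \<in> {p. R (fst p) (snd p)}" and lim: "s \<longlonglongrightarrow> p"
  define xs ys where "xs = (\<lambda>n. fst (s n))" and "ys = (\<lambda>n. snd (s n))"
  define x y where "x = fst p" and "y = snd p"
  have xs: "xs \<longlonglongrightarrow> x" and ys: "ys \<longlonglongrightarrow> y"
    unfolding xs_def ys_def x_def y_def by (intro tendsto_fst tendsto_snd lim)+
  have R_n: "R (xs n) (ys n)" for n
    using s unfolding xs_def ys_def by simp
  have Z_n: "xs n \<in> Zset" "ys n \<in> Zset" for n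
    using classical_Zset[OF R R_n] by blast+
  have xZ: "x \<in> Zset" and yZ: "y \<in> Zset"
    using Lim_in_closed_set[OF closed_Zset _ _ xs] Lim_in_closed_set[OF closed_Zset _ _ ys] Z_n
    by auto
  have "R x y"
  proof (rule ccontr)
    assume "\<not> R x y"
    then obtain w where w: "w \<in> Zset" "\<not> R w y" "\<not> R x w"
      using classical_strict_dense[OF R xZ yZ] by blast
    have "eventually (\<lambda>n. ys n \<in> {u \<in> Zset. \<not> R w u}) sequentially"
      by (rule eventually_in_openin_Zset[OF classical_strict_contours_openin(2)[OF R w(1)] _ ys Z_n(2)])
        (use w yZ in auto)
    moreover have "eventually (\<lambda>n. xs n \<in> {u \<in> Zset. \<not> R u w}) sequentially"
      by (rule eventually_in_openin_Zset[OF classical_strict_contours_openin(1)[OF R w(1)] _ xs Z_n(1)])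
        (use w xZ in auto)
    ultimately have "eventually (\<lambda>n. \<not> R w (ys n) \<and> \<not> R (xs n) w) sequentially"
      by eventually_elim auto
    then obtain n where "\<not> R w (ys n)" "\<not> R (xs n) w"
      using eventually_happens'[OF trivial_limit_sequentially] by blast
    then show False
      using R_n[of n] classical_total[OF R w(1) Z_n(2)] classical_trans[OF R] by blast
  qed
  then show "p \<in> {p. R (fst p) (snd p)}"
    by (simp add: x_def y_def)
qed

lemma pref_tendsto:
  assumes R: "classical R" and "xs \<longlonglongrightarrow> x" "ys \<longlonglongrightarrow> y"
    and "eventually (\<lambda>n. R (xs n) (ys n)) sequentially"
  shows "R x y"
proof -
  have "(x, y) \<in> {p. R (fst p) (snd p)}"
    using Lim_in_closed_set[OF classical_graph_closed[OF R] _ trivial_limit_sequentially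
        tendsto_Pair[OF assms(2,3)]] assms(4) by simp
  then show ?thesis by simp
qed

lemma dist_Pair_le:
  fixes a c :: "'a::metric_space" and b d :: "'b::metric_space"
  shows "dist (a, b) (c, d) \<le> dist a c + dist b d"
  unfolding dist_Pair_Pair using sqrt_sum_squares_le_sum_abs[of "dist a c" "dist b d"] by simp

lemma not_pref_nhd:
  assumes R: "classical R" and nxy: "\<not> R x y"
  obtains e where "e > 0" "\<And>x' y'. dist x' x < e \<Longrightarrow> dist y' y < e \<Longrightarrow> \<not> R x' y'"
proof -
  have "open (- {p. R (fst p) (snd p)})"
    using classical_graph_closed[OF R] by (simp add: open_Compl)
  moreover have "(x, y) \<in> - {p. R (fst p) (snd p)}"
    using nxy by simp
  ultimately obtain e where e: "e > 0" "\<And>p. dist p (x, y) < e \<Longrightarrow> p \<in> - {p. R (fst p) (snd p)}"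
    unfolding open_dist by blast
  have "\<not> R x' y'" if "dist x' x < e / 2" "dist y' y < e / 2" for x' y'
  proof -
    have "dist (x', y') (x, y) < e"
      using dist_Pair_le[of x' y' x y] that by linarith
    then show ?thesis
      using e(2) by fastforce
  qed
  moreover have "e / 2 > 0"
    using e(1) by simp
  ultimately show thesis
    using that by blast
qed

lemma pref_intermediate_value:
  assumes R: "classical R" and S: "connected S" and p: "continuous_on S p"
    and pZ: "\<And>s. s \<in> S \<Longrightarrow> p s \<in> Zset" and z: "z \<in> Zset"
    and a: "a \<in> S" "R (p a) z" and b: "b \<in> S" "R z (p b)"
  obtains s where "s \<in> S" "indiff R (p s) z"
proof -
  define A where "A = S \<inter> (\<lambda>s. (p s, z)) -` {q. R (fst q) (snd q)}"
  define B where "B = S \<inter> (\<lambda>s. (z, p s)) -` {q. R (fst q) (snd q)}"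
  have "closedin (top_of_set S) A" "closedin (top_of_set S) B"
    unfolding A_def B_def
    by (intro continuous_closedin_preimage classical_graph_closed[OF R] continuous_intros p)+
  moreover have "S \<subseteq> A \<union> B"
    using classical_total[OF R pZ z] by (auto simp: A_def B_def)
  moreover have "A \<noteq> {}" "B \<noteq> {}"
    using a b by (auto simp: A_def B_def)
  ultimately have "A \<inter> B \<noteq> {}"
    using S unfolding connected_closedin by blast
  then show thesis
    using that unfolding A_def B_def indiff_def by auto
qed

lemma indiff_at_level:
  assumes R: "classical R" and z: "z \<in> Zset" and l: "0 \<le> l" "l < snd z" and better: "R (0, l) z"
  obtains t where "zless (t, l) z" "indiff R (t, l) z"
proof -
  have lZ: "(t, l) \<in> Zset" if "t \<in> {0..fst z}" for t
    using that l z by (simp add: Zset_iff)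
  have ends: "0 \<in> {0..fst z}" "fst z \<in> {0..fst z}"
    using z by (simp_all add: Zset_iff)
  have "R z (fst z, l)"
    using pref_if_dominates[OF R z lZ[OF ends(2)]] l by simp
  moreover have cont: "continuous_on {0..fst z} (\<lambda>t. (t, l))"
    by (intro continuous_on_Pair continuous_on_id continuous_on_const)
  ultimately obtain t where t: "t \<in> {0..fst z}" "indiff R (t, l) z"
    using pref_intermediate_value[OF R connected_Icc cont lZ z ends(1) _ ends(2)] better by auto
  then have "R (t, l) z"
    unfolding indiff_def by blast
  then have "t < fst z"
    using pref_fst_less[OF R, of "(t, l)" z] l(2) by simp
  then show thesis
    using that t(2) l(2) by (simp add: zless_def)
qed

lemma exists_strictly_better_level:
  assumes R: "classical R" and z: "z \<in> Zset" and pos: "0 < fst z" "0 < snd z"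
  obtains l where "0 \<le> l" "l < snd z" "\<not> R z (0, l)"
proof -
  have "(0, snd z) \<in> Zset"
    using z by (simp add: Zset_iff)
  moreover have "(0, snd z) \<noteq> z"
    using pos(1) by (cases z) auto
  ultimately have "strict R (0, snd z) z"
    using strict_if_dominates[OF R _ z] z by (simp add: Zset_iff)
  then obtain e where e: "e > 0" "\<And>x' y. dist x' z < e \<Longrightarrow> dist y (0, snd z) < e \<Longrightarrow> \<not> R x' y"
    using not_pref_nhd[OF R] unfolding strict_def by blast
  define l where "l = max 0 (snd z - e / 2)"
  have l: "0 \<le> l" "l < snd z"
    using e(1) pos by (auto simp: l_def)
  have "dist l (snd z) < e"
    using e(1) l by (auto simp: l_def dist_real_def)
  moreover have "dist (0::real, l) (0, snd z) \<le> dist l (snd z)"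
    using dist_Pair_le[of "0::real" l 0 "snd z"] by simp
  ultimately have "dist (0::real, l) (0, snd z) < e"
    by linarith
  then have "\<not> R z (0, l)"
    using e by simp
  with l show thesis
    using that by blast
qed

lemma exists_indiff_below:
  assumes R: "classical R" and z: "z \<in> Zset" and pos: "0 < fst z" "0 < snd z"
  obtains x where "zless x z" "indiff R x z"
proof -
  obtain l where l: "0 \<le> l" "l < snd z" "\<not> R z (0, l)"
    using exists_strictly_better_level[OF assms] .
  have "R (0, l) z"
    using classical_total[OF R _ z, of "(0, l)"] l z by (auto simp: Zset_iff)
  then show thesis
    using indiff_at_level[OF R z l(1,2)] that by blast
qed

lemma exists_indiff_below_weakly_worse:
  assumes R: "classical R" and z: "z \<in> Zset" and x: "x \<in> Zset" and xz: "zless x z" and pref: "R x z"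
  obtains y where "zless y z" "indiff R y z" "snd y = snd x" "fst x \<le> fst y"
proof -
  have "R (0, snd x) x"
    using pref_if_dominates[OF R _ x] x by (simp add: Zset_iff)
  then have "R (0, snd x) z"
    using classical_trans[OF R] pref by blast
  moreover have "0 \<le> snd x" "snd x < snd z"
    using x xz by (auto simp: Zset_iff zless_def)
  ultimately obtain t where t: "zless (t, snd x) z" "indiff R (t, snd x) z"
    using indiff_at_level[OF R z] by blast
  have "R x (t, snd x)"
    using classical_trans[OF R pref] t(2) unfolding indiff_def by blast
  then have "fst x \<le> t"
    using pref_fst_le[OF R] by fastforce
  then show thesis
    using that t by simp
qed

lemma indiff_on_axis_above:
  assumes R: "classical R" and z: "z \<in> Zset" and pos: "0 < fst z"
    and q: "0 \<le> q" "q < snd z" and worse: "\<not> R (0, q) z"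
  obtains q' where "q \<le> q'" "q' < snd z" "indiff R (0, q') z"
proof -
  obtain l where l: "0 \<le> l" "l < snd z" "\<not> R z (0, l)"
    using exists_strictly_better_level[OF R z pos] q by force
  have lZ: "(0, p) \<in> Zset" if "0 \<le> p" "p \<le> l" for p
    using that l z by (simp add: Zset_iff)
  have qZ: "(0, q) \<in> Zset"
    using q z by (simp add: Zset_iff)
  have better: "R (0, l) z"
    using classical_total[OF R lZ[OF l(1) order_refl] z] l(3) by blast
  have "q \<le> l"
  proof (rule ccontr)
    assume "\<not> q \<le> l"
    then have "R (0, q) (0, l)"
      using pref_if_dominates[OF R qZ lZ[OF l(1) order_refl]] by simp
    then show False
      using worse better classical_trans[OF R] by blast
  qed
  then have ends: "l \<in> {q..l}" "q \<in> {q..l}"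
    by auto
  have cont: "continuous_on {q..l} (\<lambda>p. (0, p))"
    by (intro continuous_on_Pair continuous_on_id continuous_on_const)
  have "R z (0, q)"
    using classical_total[OF R qZ z] worse by blast
  then obtain q' where q': "q' \<in> {q..l}" "indiff R (0, q') z"
    using pref_intermediate_value[OF R connected_Icc cont _ z ends(1) better ends(2)] lZ q(1) by auto
  show thesis
    by (rule that[of q']) (use q' l(2) in auto)
qed

lemma exists_indiff_below_strictly_better:
  assumes R: "classical R" and z: "z \<in> Zset" and x: "x \<in> Zset" and xz: "zless x z"
    and worse: "\<not> R x z"
  obtains y where "zless y z" "indiff R y z" "fst y \<le> fst x" "snd x \<le> snd y" "y \<noteq> x"
proof -
  have lx: "0 \<le> snd x" "snd x < snd z" "0 \<le> fst x" "fst x < fst z"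
    using x xz by (auto simp: Zset_iff zless_def)
  have ne: "y \<noteq> x" if "indiff R y z" for y
    using worse that unfolding indiff_def by auto
  show thesis
  proof (cases "R (0, snd x) z")
    case True
    then obtain t where t: "zless (t, snd x) z" "indiff R (t, snd x) z"
      using indiff_at_level[OF R z lx(1,2)] by blast
    have "t \<le> fst x"
    proof (rule ccontr)
      assume "\<not> t \<le> fst x"
      moreover have "(t, snd x) \<in> Zset"
        using classical_Zset[OF R] t(2) unfolding indiff_def by blast
      ultimately have "R x (t, snd x)"
        using pref_if_dominates[OF R x] by simp
      then show False
        using worse t(2) classical_trans[OF R] unfolding indiff_def by blast
    qed
    then show thesis
      using that t ne[OF t(2)] by simp
  next
    case False
    then obtain q where "snd x \<le> q" "q < snd z" "indiff R (0, q) z"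
      using indiff_on_axis_above[OF R z _ lx(1,2)] lx by force
    then show thesis
      using that[of "(0, q)"] ne lx by (simp add: zless_def)
  qed
qed

section \<open>Single crossing orders the domain\<close>

lemma single_crossing_common_indiff:
  assumes a: "classical a" and b: "classical b" and sc: "single_crossing a b"
    and z: "z \<in> Zset" and xa: "indiff a x z" and xb: "indiff b x z"
  shows "x = z"
proof -
  have "x \<in> Zset"
    using classical_Zset[OF a] xa unfolding indiff_def by blast
  then have "x \<in> indiff_set a z \<inter> indiff_set b z" "z \<in> indiff_set a z \<inter> indiff_set b z"
    using xa xb z classical_refl[OF a z] classical_refl[OF b z]
    by (auto simp: indiff_set_def indiff_def)
  then show ?thesis
    using sc z unfolding single_crossing_def by blast
qed

lemma not_indiff_below:
  assumes a: "classical a" and b: "classical b" and sc: "single_crossing a b"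
    and xz: "zless x z" and xb: "indiff b x z"
  shows "\<not> indiff a x z"
proof
  assume "indiff a x z"
  moreover have "z \<in> Zset"
    using classical_Zset[OF b] xb unfolding indiff_def by blast
  ultimately have "x = z"
    using single_crossing_common_indiff[OF a b sc _ _ xb] by blast
  then show False
    using xz unfolding zless_def by simp
qed

lemma compact_pref_set:
  fixes K :: "'a::t2_space set"
  assumes R: "classical R" and K: "compact K" and f: "continuous_on K f" and g: "continuous_on K g"
  shows "compact {p \<in> K. R (f p) (g p)}"
proof -
  have "closed (K \<inter> (\<lambda>p. (f p, g p)) -` {q. R (fst q) (snd q)})"
    using continuous_closed_preimage[OF continuous_on_Pair[OF f g] compact_imp_closed[OF K]
        classical_graph_closed[OF R]] .
  then have "compact (K \<inter> (K \<inter> (\<lambda>p. (f p, g p)) -` {q. R (fst q) (snd q)}))"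
    using K by blast
  moreover have "K \<inter> (K \<inter> (\<lambda>p. (f p, g p)) -` {q. R (fst q) (snd q)}) = {p \<in> K. R (f p) (g p)}"
    by auto
  ultimately show ?thesis
    by simp
qed

lemma indiff_partners_bounded:
  fixes g :: "real \<Rightarrow> alloc" and l :: "real \<Rightarrow> real"
  assumes b: "classical b" and g: "continuous_on {0..1} g"
    and adm: "\<And>s. s \<in> {0..1} \<Longrightarrow> l s < snd (g s)"
  obtains M where "\<And>s t. s \<in> {0..1} \<Longrightarrow> b (t, l s) (g s) \<Longrightarrow> t \<in> {0..M}"
proof -
  have "compact ((\<lambda>s. fst (g s)) ` {0..1})"
    by (intro compact_continuous_image continuous_on_fst g compact_Icc)
  then obtain s0 where s0: "\<forall>s\<in>{0..1}. fst (g s) \<le> fst (g s0)"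
    using compact_attains_sup[of "(\<lambda>s. fst (g s)) ` {0..1}"] by auto
  have "t \<in> {0..fst (g s0)}" if "s \<in> {0..1}" "b (t, l s) (g s)" for s t
  proof -
    have "(t, l s) \<in> Zset"
      using classical_Zset[OF b that(2)] by blast
    moreover have "t < fst (g s)"
      using pref_fst_less[OF b that(2)] adm[OF that(1)] by simp
    moreover have "fst (g s) \<le> fst (g s0)"
      using s0 that(1) by blast
    ultimately show ?thesis
      by (simp add: Zset_iff)
  qed
  then show thesis
    using that by blast
qed

lemma closed_indiff_partner_sets:
  fixes g :: "real \<Rightarrow> alloc" and l :: "real \<Rightarrow> real"
  assumes a: "classical a" and b: "classical b"
    and g: "continuous_on {0..1} g" and l: "continuous_on {0..1} l"
    and adm: "\<And>s. s \<in> {0..1} \<Longrightarrow> l s < snd (g s)"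
  shows "closed {s \<in> {0..1}. \<exists>t. indiff b (t, l s) (g s) \<and> a (t, l s) (g s)}"
    and "closed {s \<in> {0..1}. \<exists>t. indiff b (t, l s) (g s) \<and> a (g s) (t, l s)}"
proof -
  obtain M where M: "\<And>s t. s \<in> {0..1} \<Longrightarrow> b (t, l s) (g s) \<Longrightarrow> t \<in> {0..M}"
    using indiff_partners_bounded[OF b g adm] by blast
  define K where "K = {0..1::real} \<times> {0..M}"
  define f where "f = (\<lambda>p::real \<times> real. (snd p, l (fst p)))"
  define h where "h = (\<lambda>p::real \<times> real. g (fst p))"
  have K: "compact K"
    unfolding K_def by (intro compact_Times compact_Icc)
  have fst_K: "fst ` K \<subseteq> {0..1}"
    unfolding K_def by auto
  have f: "continuous_on K f"
    unfolding f_def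
    by (intro continuous_on_Pair continuous_on_snd continuous_on_id
        continuous_on_compose2[OF l continuous_on_fst fst_K])
  have h: "continuous_on K h"
    unfolding h_def by (intro continuous_on_compose2[OF g continuous_on_fst fst_K] continuous_on_id)
  define I where "I = {p \<in> K. b (f p) (h p)} \<inter> {p \<in> K. b (h p) (f p)}"
  have eq: "{s \<in> {0..1}. \<exists>t. indiff b (t, l s) (g s) \<and> Q (s, t)} = fst ` (I \<inter> {p \<in> K. Q p})"
    for Q
  proof (intro equalityI subsetI)
    fix s
    assume "s \<in> {s \<in> {0..1}. \<exists>t. indiff b (t, l s) (g s) \<and> Q (s, t)}"
    then obtain t where t: "s \<in> {0..1}" "indiff b (t, l s) (g s)" "Q (s, t)"
      by blast
    then have "(s, t) \<in> I \<inter> {p \<in> K. Q p}"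
      using M[OF t(1)] unfolding I_def f_def h_def K_def indiff_def by simp
    then show "s \<in> fst ` (I \<inter> {p \<in> K. Q p})"
      by (rule rev_image_eqI) simp
  next
    fix s
    assume "s \<in> fst ` (I \<inter> {p \<in> K. Q p})"
    then obtain t where "(s, t) \<in> I" "Q (s, t)"
      by force
    then show "s \<in> {s \<in> {0..1}. \<exists>t. indiff b (t, l s) (g s) \<and> Q (s, t)}"
      unfolding I_def f_def h_def K_def indiff_def by auto
  qed
  have "closed (fst ` (I \<inter> {p \<in> K. a (f p) (h p)}))" "closed (fst ` (I \<inter> {p \<in> K. a (h p) (f p)}))"
    unfolding I_def
    by (intro compact_imp_closed compact_continuous_image continuous_on_fst continuous_on_id
        compact_Int compact_pref_set a b K f h)+
  then show "closed {s \<in> {0..1}. \<exists>t. indiff b (t, l s) (g s) \<and> a (t, l s) (g s)}"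
    and "closed {s \<in> {0..1}. \<exists>t. indiff b (t, l s) (g s) \<and> a (g s) (t, l s)}"
    using eq[of "\<lambda>p. a (f p) (h p)"] eq[of "\<lambda>p. a (h p) (f p)"] by (simp_all add: f_def h_def)
qed

text \<open>Along a path of bundles g s with b-indifferent
  partners at levels l s, the a-ranking of bundle and partner cannot flip: where it flips,
  the partner would be a-indifferent as well, so it would lie on both indifference curves
  through g s, against single crossing.\<close>
lemma indiff_sign_constant_along_path:
  fixes g :: "real \<Rightarrow> alloc" and l :: "real \<Rightarrow> real"
  assumes a: "classical a" and b: "classical b" and sc: "single_crossing a b"
    and g: "continuous_on {0..1} g" and l: "continuous_on {0..1} l"
    and adm: "\<And>s. s \<in> {0..1} \<Longrightarrow> g s \<in> Zset \<and> 0 \<le> l s \<and> l s < snd (g s) \<and> b (0, l s) (g s)"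
    and start: "indiff b (u, l 0) (g 0)" "\<not> a (u, l 0) (g 0)"
    and stop: "indiff b (v, l 1) (g 1)" "\<not> a (g 1) (v, l 1)"
  shows False
proof -
  define A where "A = {s \<in> {0..1}. \<exists>t. indiff b (t, l s) (g s) \<and> a (t, l s) (g s)}"
  define B where "B = {s \<in> {0..1}. \<exists>t. indiff b (t, l s) (g s) \<and> a (g s) (t, l s)}"
  have closed: "closed A" "closed B"
    unfolding A_def B_def using closed_indiff_partner_sets[OF a b g l] adm by simp_all
  have total: "a (t, l s) (g s) \<or> a (g s) (t, l s)" if "indiff b (t, l s) (g s)" for s t
    using classical_total[OF a] classical_Zset[OF b] that unfolding indiff_def by blast
  have cover: "{0..1} \<subseteq> A \<union> B"
  proof
    fix s :: real
    assume s: "s \<in> {0..1}"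
    obtain t where "zless (t, l s) (g s)" "indiff b (t, l s) (g s)"
      using indiff_at_level[OF b] adm[OF s] by blast
    then show "s \<in> A \<union> B"
      using total s unfolding A_def B_def by blast
  qed
  have "1 \<in> A" "0 \<in> B"
    using total[OF stop(1)] total[OF start(1)] start stop unfolding A_def B_def by auto
  then have "A \<inter> {0..1} \<noteq> {}" "B \<inter> {0..1} \<noteq> {}"
    by auto
  then have "A \<inter> B \<inter> {0..1} \<noteq> {}"
    using connected_Icc[of "0::real" 1] closed cover unfolding connected_closed by blast
  then obtain s t t' where s: "s \<in> {0..1}" and
    t: "indiff b (t, l s) (g s)" "a (t, l s) (g s)" and
    t': "indiff b (t', l s) (g s)" "a (g s) (t', l s)"
    unfolding A_def B_def by blast
  have "b (t, l s) (t', l s)" "b (t', l s) (t, l s)"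
    using classical_trans[OF b] t(1) t'(1) unfolding indiff_def by blast+
  then have "t = t'"
    using pref_fst_le[OF b, of "(t, l s)" "(t', l s)"] pref_fst_le[OF b, of "(t', l s)" "(t, l s)"]
    by simp
  then have "(t, l s) = g s"
    using single_crossing_common_indiff[OF a b sc] adm[OF s] t t' unfolding indiff_def by blast
  then show False
    using adm[OF s] by (metis less_irrefl snd_conv)
qed

lemma min_le_convex_comb:
  fixes x y s :: real
  assumes "0 \<le> s" "s \<le> 1"
  shows "min x y \<le> (1 - s) * x + s * y"
proof -
  have "min x y = (1 - s) * min x y + s * min x y"
    by (simp add: algebra_simps)
  also have "\<dots> \<le> (1 - s) * x + s * y"
    using assms by (intro add_mono mult_left_mono) auto
  finally show ?thesis .
qed

lemma indiff_sign_unique: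
  assumes a: "classical a" and b: "classical b" and sc: "single_crossing a b"
    and x: "zless x z" "indiff b x z" "\<not> a x z"
    and y: "zless y z" "indiff b y z" "\<not> a z y"
  shows False
proof -
  obtain tx lx ty ly where xy: "x = (tx, lx)" "y = (ty, ly)"
    by fastforce
  have xZ: "x \<in> Zset" and yZ: "y \<in> Zset" and z: "z \<in> Zset"
    using classical_Zset[OF b] x(2) y(2) unfolding indiff_def by blast+
  have levels: "0 \<le> lx" "0 \<le> ly" "lx < snd z" "ly < snd z" and "0 \<le> tx" "0 \<le> ty"
    using xZ yZ x(1) y(1) xy by (auto simp: Zset_iff zless_def)
  define ll where "ll = (\<lambda>s::real. (1 - s) * lx + s * ly)"
  have adm: "z \<in> Zset \<and> 0 \<le> ll s \<and> ll s < snd z \<and> b (0, ll s) z" if s: "s \<in> {0..1}" for s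
  proof -
    have min: "min lx ly \<le> ll s"
      using min_le_convex_comb s unfolding ll_def by simp
    have less: "ll s < snd z"
      using convex_bound_lt[OF levels(3,4), of "1 - s" s] s unfolding ll_def by simp
    have lZ: "(0, ll s) \<in> Zset"
      using min less levels z by (simp add: Zset_iff)
    have "b (0, ll s) x \<or> b (0, ll s) y"
    proof (cases "lx \<le> ly")
      case True
      then show ?thesis
        using pref_if_dominates[OF b lZ xZ] min xy \<open>0 \<le> tx\<close> by simp
    next
      case False
      then show ?thesis
        using pref_if_dominates[OF b lZ yZ] min xy \<open>0 \<le> ty\<close> by simp
    qed
    then have "b (0, ll s) z"
      using classical_trans[OF b] x(2) y(2) unfolding indiff_def by blast
    with z min less levels show ?thesis
      by simp
  qed
  have cont: "continuous_on {0..1} ll"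
    unfolding ll_def by (intro continuous_intros)
  have ends: "ll 0 = lx" "ll 1 = ly"
    by (simp_all add: ll_def)
  show False
    by (rule indiff_sign_constant_along_path[OF a b sc continuous_on_const cont, where u = tx and v = ty])
      (use adm x y xy ends in simp_all)
qed

lemma indiff_sign_constant_along_segment:
  assumes a: "classical a" and b: "classical b" and sc: "single_crossing a b"
    and z1: "z1 \<in> Zset" and z2: "z2 \<in> Zset" and l: "0 \<le> l"
    and seg: "\<And>s. s \<in> {0..1} \<Longrightarrow>
      l < snd ((1 - s) *\<^sub>R z1 + s *\<^sub>R z2) \<and> b (0, l) ((1 - s) *\<^sub>R z1 + s *\<^sub>R z2)"
    and start: "indiff b (u, l) z1" "\<not> a (u, l) z1"
    and stop: "indiff b (v, l) z2" "\<not> a z2 (v, l)"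
  shows False
proof -
  define g where "g = (\<lambda>s::real. (1 - s) *\<^sub>R z1 + s *\<^sub>R z2)"
  have cont: "continuous_on {0..1} g"
    unfolding g_def by (intro continuous_intros)
  have adm: "g s \<in> Zset \<and> 0 \<le> l \<and> l < snd (g s) \<and> b (0, l) (g s)" if "s \<in> {0..1}" for s
    using convexD[OF convex_Zset z1 z2, of "1 - s" s] that seg[OF that] l unfolding g_def by auto
  have ends: "g 0 = z1" "g 1 = z2"
    by (simp_all add: g_def)
  show False
    by (rule indiff_sign_constant_along_path[OF a b sc cont continuous_on_const, where u = u and v = v])
      (use adm start stop ends in simp_all)
qed


definition Zpos :: "alloc set" where
  "Zpos = {0<..} \<times> {0<..1}"

lemma Zpos_subset_Zset: "Zpos \<subseteq> Zset"
  by (auto simp: Zpos_def Zset_def)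

lemma connected_Zpos: "connected Zpos"
  unfolding Zpos_def by (intro convex_connected convex_Times convex_real_interval)

lemma Zpos_if_zless: "x \<in> Zset \<Longrightarrow> z \<in> Zset \<Longrightarrow> zless x z \<Longrightarrow> z \<in> Zpos"
  by (auto simp: Zpos_def Zset_iff zless_def mem_Times_iff)

text \<open>In the (t, q)-plane, a's indifference curve through z is steeper than b's.\<close>
definition steeper_at :: "pref \<Rightarrow> pref \<Rightarrow> alloc \<Rightarrow> bool" where
  "steeper_at a b z \<longleftrightarrow> (\<exists>x. zless x z \<and> indiff b x z \<and> \<not> a x z)"

lemma steeper_at_iff:
  assumes a: "classical a" and b: "classical b" and sc: "single_crossing a b"
    and x: "zless x z" "indiff b x z"
  shows "steeper_at a b z \<longleftrightarrow> \<not> a x z"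
proof
  assume "steeper_at a b z"
  then obtain y where y: "zless y z" "indiff b y z" "\<not> a y z"
    unfolding steeper_at_def by blast
  show "\<not> a x z"
  proof
    assume "a x z"
    then have "\<not> a z x"
      using not_indiff_below[OF a b sc x] unfolding indiff_def by blast
    then show False
      using indiff_sign_unique[OF a b sc y x] by blast
  qed
next
  assume "\<not> a x z"
  then show "steeper_at a b z"
    using x unfolding steeper_at_def by blast
qed

lemma common_level_near:
  assumes b: "classical b" and z0: "z0 \<in> Zpos"
  obtains l e where "0 \<le> l" "e > 0" "\<And>z. z \<in> Zset \<Longrightarrow> dist z z0 < e \<Longrightarrow> l < snd z \<and> b (0, l) z"
proof -
  have z0Z: "z0 \<in> Zset" and pos: "0 < fst z0" "0 < snd z0"
    using z0 Zpos_subset_Zset by (auto simp: Zpos_def)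
  obtain l where l: "0 \<le> l" "l < snd z0" "\<not> b z0 (0, l)"
    using exists_strictly_better_level[OF b z0Z pos] .
  obtain e1 where e1: "e1 > 0" "\<And>x' y'. dist x' z0 < e1 \<Longrightarrow> dist y' (0, l) < e1 \<Longrightarrow> \<not> b x' y'"
    using not_pref_nhd[OF b l(3)] by blast
  define e where "e = min e1 (snd z0 - l)"
  have lZ: "(0, l) \<in> Zset"
    using l z0Z by (simp add: Zset_iff)
  have "l < snd z \<and> b (0, l) z" if z: "z \<in> Zset" "dist z z0 < e" for z
  proof
    have "dist (snd z) (snd z0) \<le> dist z z0"
      by (rule dist_snd_le)
    then show "l < snd z"
      using z(2) by (auto simp: e_def dist_real_def)
    have "\<not> b z (0, l)"
      using e1(2)[of z "(0, l)"] e1(1) z(2) by (simp add: e_def)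
    then show "b (0, l) z"
      using classical_total[OF b lZ z(1)] by blast
  qed
  moreover have "e > 0"
    using e1(1) l(2) by (simp add: e_def)
  ultimately show thesis
    using that l(1) by blast
qed

text \<open>Two nearby bundles share a level at which both have b-indifferent partners, and the
  segment between them stays admissible, so steeper_at cannot change between them.\<close>
lemma steeper_at_locally_constant:
  assumes a: "classical a" and b: "classical b" and sc: "single_crossing a b" and z0: "z0 \<in> Zpos"
  shows "eventually (\<lambda>z. steeper_at a b z0 = steeper_at a b z) (at z0 within Zpos)"
proof -
  obtain l e where l: "0 \<le> l" and e: "e > 0"
    and near: "\<And>z. z \<in> Zset \<Longrightarrow> dist z z0 < e \<Longrightarrow> l < snd z \<and> b (0, l) z"
    using common_level_near[OF b z0] by blast
  have z0Z: "z0 \<in> Zset"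
    using z0 Zpos_subset_Zset by blast
  have in_ball: "l < snd ((1 - s) *\<^sub>R p + s *\<^sub>R q) \<and> b (0, l) ((1 - s) *\<^sub>R p + s *\<^sub>R q)"
    if "p \<in> Zset \<inter> ball z0 e" "q \<in> Zset \<inter> ball z0 e" "s \<in> {0..1}" for p q s
  proof -
    have "(1 - s) *\<^sub>R p + s *\<^sub>R q \<in> Zset \<inter> ball z0 e"
      using convexD[OF convex_Int[OF convex_Zset convex_ball] that(1,2), of "1 - s" s] that(3) by auto
    then have "(1 - s) *\<^sub>R p + s *\<^sub>R q \<in> Zset" "dist ((1 - s) *\<^sub>R p + s *\<^sub>R q) z0 < e"
      by (simp_all add: dist_commute)
    then show ?thesis
      by (rule near)
  qed
  have "steeper_at a b z0 = steeper_at a b z" if z: "z \<in> Zpos" "dist z z0 < e" for z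
  proof -
    have zZ: "z \<in> Zset"
      using z(1) Zpos_subset_Zset by blast
    have balls: "z0 \<in> Zset \<inter> ball z0 e" "z \<in> Zset \<inter> ball z0 e"
      using z0Z zZ e z(2) by (simp_all add: dist_commute)
    obtain t0 where t0: "zless (t0, l) z0" "indiff b (t0, l) z0"
      using indiff_at_level[OF b z0Z l] near[OF z0Z] e by auto
    obtain t where t: "zless (t, l) z" "indiff b (t, l) z"
      using indiff_at_level[OF b zZ l] near[OF zZ z(2)] by blast
    have "\<not> a (t0, l) z0 \<or> \<not> a z0 (t0, l)" "\<not> a (t, l) z \<or> \<not> a z (t, l)"
      using not_indiff_below[OF a b sc t0] not_indiff_below[OF a b sc t] unfolding indiff_def by blast+
    then show ?thesis
      unfolding steeper_at_iff[OF a b sc t0] steeper_at_iff[OF a b sc t]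
      using indiff_sign_constant_along_segment[OF a b sc z0Z zZ l in_ball[OF balls] t0(2) _ t(2)]
        indiff_sign_constant_along_segment[OF a b sc zZ z0Z l in_ball[OF balls(2,1)] t(2) _ t0(2)]
      by blast
  qed
  then show ?thesis
    unfolding eventually_at using e by blast
qed

lemma single_crossing_sign_dichotomy:
  assumes a: "classical a" and b: "classical b" and sc: "single_crossing a b"
  shows "(\<forall>x z. zless x z \<and> indiff b x z \<longrightarrow> a x z) \<or> (\<forall>x z. zless x z \<and> indiff b x z \<longrightarrow> a z x)"
proof -
  have pair_Z: "x \<in> Zset" "z \<in> Zset" if "indiff b x z" for x z
    using classical_Zset[OF b] that unfolding indiff_def by blast+
  have const: "steeper_at a b z = steeper_at a b (1, 1)" if "zless x z" "indiff b x z" for x z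
  proof (rule connected_local_const[OF connected_Zpos])
    show "z \<in> Zpos"
      using Zpos_if_zless pair_Z that by blast
    show "(1, 1) \<in> Zpos"
      by (simp add: Zpos_def)
    show "\<forall>z\<in>Zpos. eventually (\<lambda>y. steeper_at a b z = steeper_at a b y) (at z within Zpos)"
      using steeper_at_locally_constant[OF a b sc] by blast
  qed
  show ?thesis
  proof (cases "steeper_at a b (1, 1)")
    case True
    have "a z x" if "zless x z" "indiff b x z" for x z
      using steeper_at_iff[OF a b sc that] const[OF that] True classical_total[OF a pair_Z[OF that(2)]]
      by blast
    then show ?thesis
      by blast
  next
    case False
    have "a x z" if "zless x z" "indiff b x z" for x z
      using const[OF that] False that unfolding steeper_at_def by blast
    then show ?thesis
      by blast
  qed
qed


lemma prec_pref_smaller: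
  assumes a: "classical a" and p: "prec R a" and wz: "zle w z" and pref: "a w z"
  shows "R w z"
proof -
  have "w \<in> box z" "z \<in> Zset"
    using classical_Zset[OF a pref] wz by (auto simp: box_def)
  then show ?thesis
    using p pref unfolding prec_def by blast
qed

text \<open>If R strictly preferred z to u, a bundle slightly to the right of z would still be
  R-preferred to u, hence a-preferred to u by the definition of \<prec>, hence a-preferred to z.\<close>
lemma prec_pref_larger:
  assumes a: "classical a" and R: "classical R" and p: "prec a R" and zu: "zless z u" and pref: "a u z"
  shows "R u z"
proof (rule ccontr)
  assume "\<not> R u z"
  then obtain e where e: "e > 0" "\<And>x' y'. dist x' u < e \<Longrightarrow> dist y' z < e \<Longrightarrow> \<not> R x' y'"
    using not_pref_nhd[OF R] by blast
  have uZ: "u \<in> Zset" and zZ: "z \<in> Zset"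
    using classical_Zset[OF a pref] by blast+
  obtain h where h: "0 < h" "h < e" "h < fst u - fst z"
    using field_lbound_gt_zero[of e "fst u - fst z"] e(1) zu by (auto simp: zless_def)
  define z' where "z' = (fst z + h, snd z)"
  have z'Z: "z' \<in> Zset"
    using zZ h by (simp add: z'_def Zset_iff)
  have "dist z' z \<le> h"
    using dist_Pair_le[of "fst z + h" "snd z" "fst z" "snd z"] h(1) by (simp add: z'_def dist_real_def)
  then have "\<not> R u z'"
    using e(2)[of u z'] e(1) h(2) by simp
  then have "R z' u"
    using classical_total[OF R z'Z uZ] by blast
  moreover have "zle z' u"
    using h zu by (simp add: z'_def zle_def zless_def)
  ultimately have "a z' z"
    using prec_pref_smaller[OF R p] classical_trans[OF a _ pref] by blast
  moreover have "strict a z z'"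
    using strict_if_dominates[OF a zZ z'Z] h(1) by (simp add: z'_def prod_eq_iff)
  ultimately show False
    unfolding strict_def by blast
qed

lemma prec_if_pref_smaller_indiff_below:
  assumes a: "classical a" and b: "classical b" and ne: "a \<noteq> b"
    and H: "\<And>x z. zless x z \<Longrightarrow> indiff b x z \<Longrightarrow> a x z"
  shows "prec a b"
proof -
  have "a x z" if z: "z \<in> Zset" and x: "x \<in> box z" and pref: "b x z" for x z
  proof (cases "x = z")
    case True
    then show ?thesis
      using classical_refl[OF a z] by simp
  next
    case False
    then have xz: "zless x z" and xZ: "x \<in> Zset"
      using x by (auto simp: box_def zle_def)
    then obtain y where y: "zless y z" "indiff b y z" "snd y = snd x" "fst x \<le> fst y"
      using exists_indiff_below_weakly_worse[OF b z xZ xz pref] by blast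
    moreover have "y \<in> Zset"
      using classical_Zset[OF b] y(2) unfolding indiff_def by blast
    ultimately have "a x y"
      using pref_if_dominates[OF a xZ] by simp
    then show ?thesis
      using H[OF y(1,2)] classical_trans[OF a] by blast
  qed
  then show ?thesis
    using ne unfolding prec_def by blast
qed

lemma prec_if_pref_larger_indiff_below:
  assumes a: "classical a" and b: "classical b" and ne: "a \<noteq> b"
    and H: "\<And>x z. zless x z \<Longrightarrow> indiff b x z \<Longrightarrow> a z x"
  shows "prec b a"
proof -
  have "b x z" if z: "z \<in> Zset" and x: "x \<in> box z" and pref: "a x z" for x z
  proof (rule ccontr)
    assume worse: "\<not> b x z"
    then have xz: "zless x z" and xZ: "x \<in> Zset"
      using x classical_refl[OF b z] by (auto simp: box_def zle_def)
    obtain y where y: "zless y z" "indiff b y z" "fst y \<le> fst x" "snd x \<le> snd y" "y \<noteq> x"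
      using exists_indiff_below_strictly_better[OF b z xZ xz worse] by blast
    moreover have "y \<in> Zset"
      using classical_Zset[OF b] y(2) unfolding indiff_def by blast
    ultimately have "strict a y x"
      using strict_if_dominates[OF a _ xZ] by simp
    moreover have "a x y"
      using classical_trans[OF a pref] H[OF y(1,2)] by blast
    ultimately show False
      unfolding strict_def by blast
  qed
  then show ?thesis
    using ne unfolding prec_def by blast
qed

lemma single_crossing_prec_total:
  assumes a: "classical a" and b: "classical b" and sc: "single_crossing a b" and ne: "a \<noteq> b"
  shows "prec a b \<or> prec b a"
  using single_crossing_sign_dichotomy[OF a b sc]
    prec_if_pref_smaller_indiff_below[OF a b ne] prec_if_pref_larger_indiff_below[OF a b ne]
  by blast

lemma single_crossing_prec_asym:
  assumes a: "classical a" and b: "classical b" and sc: "single_crossing a b" and ab: "prec a b"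
  shows "\<not> prec b a"
proof
  assume ba: "prec b a"
  obtain x where x: "zless x (1, 1)" "indiff b x (1, 1)"
    by (rule exists_indiff_below[OF b, of "(1, 1)"]) (simp_all add: Zset_iff)
  have "a x (1, 1)"
    using prec_pref_smaller[OF b ab] x unfolding zle_def indiff_def by blast
  moreover have "a (1, 1) x"
    using prec_pref_larger[OF b a ba x(1)] x(2) unfolding indiff_def by blast
  ultimately show False
    using not_indiff_below[OF a b sc x] unfolding indiff_def by blast
qed

text \<open>x and y stand for the outcomes of types A \<prec> B under a strategy-proof mechanism.\<close>
lemma prec_outcomes_zle:
  assumes A: "classical A" and B: "classical B" and sc: "single_crossing A B" and p: "prec A B"
    and xy: "A x y" and yx: "B y x"
  shows "zle x y"
proof -
  have "snd x \<le> snd y"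
  proof (rule ccontr)
    assume q: "\<not> snd x \<le> snd y"
    then have "fst y < fst x"
      using pref_fst_less[OF B yx] by simp
    then have less: "zless y x"
      using q by (simp add: zless_def)
    then have "A y x"
      using prec_pref_smaller[OF B p _ yx] by (simp add: zle_def)
    moreover have "B x y"
      using prec_pref_larger[OF A B p less xy] .
    moreover have "x \<in> Zset"
      using classical_Zset[OF A xy] by blast
    ultimately have "y = x"
      using single_crossing_common_indiff[OF A B sc] xy yx unfolding indiff_def by blast
    then show False
      using less by (simp add: zless_def)
  qed
  show ?thesis
  proof (cases "snd x = snd y")
    case True
    then have "fst x = fst y"
      using pref_fst_le[OF A xy] pref_fst_le[OF B yx] by simp
    then show ?thesis
      using True by (simp add: zle_def prod_eq_iff)
  next
    case False
    then have "snd x < snd y"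
      using \<open>snd x \<le> snd y\<close> by simp
    then show ?thesis
      using pref_fst_less[OF A xy] by (simp add: zle_def zless_def)
  qed
qed

section \<open>Rich domains and the order topology\<close>

lemma rich_classical: "rich_single_crossing D \<Longrightarrow> R \<in> D \<Longrightarrow> classical R"
  unfolding rich_single_crossing_def by blast

lemma rich_single_crossing_pair:
  "rich_single_crossing D \<Longrightarrow> a \<in> D \<Longrightarrow> b \<in> D \<Longrightarrow> a \<noteq> b \<Longrightarrow> single_crossing a b"
  unfolding rich_single_crossing_def by blast

lemma rich_prec_total:
  "rich_single_crossing D \<Longrightarrow> a \<in> D \<Longrightarrow> b \<in> D \<Longrightarrow> a \<noteq> b \<Longrightarrow> prec a b \<or> prec b a"
  using single_crossing_prec_total rich_classical rich_single_crossing_pair by metis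

lemma rich_prec_asym:
  assumes "rich_single_crossing D" "a \<in> D" "b \<in> D" "prec a b"
  shows "\<not> prec b a"
proof -
  have "a \<noteq> b"
    using assms(4) unfolding prec_def by blast
  then show ?thesis
    using single_crossing_prec_asym[OF rich_classical rich_classical rich_single_crossing_pair]
      assms by blast
qed

lemma strategy_proof_outcomes_zle:
  assumes D: "rich_single_crossing D" and ED: "E \<subseteq> D" and sp: "strategy_proof E F"
    and R: "R1 \<in> E" "R2 \<in> E" and le: "preceq R1 R2"
  shows "zle (F R1) (F R2)"
proof (cases "R1 = R2")
  case True
  then show ?thesis
    by (simp add: zle_def)
next
  case False
  then have "prec R1 R2"
    using le unfolding preceq_def by blast
  moreover have "R1 \<in> D" "R2 \<in> D"
    using R ED by blast+
  ultimately show ?thesis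
    using prec_outcomes_zle[OF rich_classical rich_classical rich_single_crossing_pair] D False sp R
    unfolding strategy_proof_def by blast
qed


lemma prec_trans: "prec a b \<Longrightarrow> prec b c \<Longrightarrow> a \<noteq> c \<Longrightarrow> prec a c"
  unfolding prec_def by blast

lemma openin_order_top_rays:
  assumes "a \<in> D"
  shows "openin (order_top D) {S \<in> D. prec S a}" and "openin (order_top D) {S \<in> D. prec a S}"
proof -
  let ?B = "{{R \<in> D. prec R a} | a. a \<in> D} \<union> {{R \<in> D. prec a R} | a. a \<in> D}"
  have "openin (topology_generated_by ?B) {S \<in> D. prec S a}"
    and "openin (topology_generated_by ?B) {S \<in> D. prec a S}"
    using assms by (auto intro: topology_generated_by_Basis)
  then have "openin (order_top D) ({S \<in> D. prec S a} \<inter> D)"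
    and "openin (order_top D) ({S \<in> D. prec a S} \<inter> D)"
    unfolding order_top_def by (auto intro: openin_subtopology_Int)
  moreover have "{S \<in> D. prec S a} \<inter> D = {S \<in> D. prec S a}" "{S \<in> D. prec a S} \<inter> D = {S \<in> D. prec a S}"
    by auto
  ultimately show "openin (order_top D) {S \<in> D. prec S a}" "openin (order_top D) {S \<in> D. prec a S}"
    by simp_all
qed

lemma limitin_order_top_eventually:
  assumes lim: "limitin (subtopology (order_top D) E) Rs R sequentially"
    and U: "openin (order_top D) U" "R \<in> U"
  shows "eventually (\<lambda>n. Rs n \<in> U) sequentially"
proof -
  have "R \<in> E"
    using limitin_topspace[OF lim] by simp
  moreover have "openin (subtopology (order_top D) E) (U \<inter> E)"
    using openin_subtopology_Int[OF U(1)] .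
  ultimately have "eventually (\<lambda>n. Rs n \<in> U \<inter> E) sequentially"
    using lim U(2) unfolding limitin_def by blast
  then show ?thesis
    by (simp add: eventually_mono)
qed

lemma monotone_seq_side_of_limit:
  fixes lt :: "'a \<Rightarrow> 'a \<Rightarrow> bool"
  assumes total: "\<And>a b. a \<in> D \<Longrightarrow> b \<in> D \<Longrightarrow> a \<noteq> b \<Longrightarrow> lt a b \<or> lt b a"
    and asym: "\<And>a b. a \<in> D \<Longrightarrow> b \<in> D \<Longrightarrow> lt a b \<Longrightarrow> \<not> lt b a"
    and trans: "\<And>a b c. lt a b \<Longrightarrow> lt b c \<Longrightarrow> a \<noteq> c \<Longrightarrow> lt a c"
    and Rs: "\<And>n. Rs n \<in> D" and R: "R \<in> D"
    and mono: "\<And>n. Rs n = Rs (Suc n) \<or> lt (Rs n) (Rs (Suc n))"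
    and lim: "\<And>a. a \<in> D \<Longrightarrow> lt R a \<Longrightarrow> eventually (\<lambda>n. lt (Rs n) a) sequentially"
  shows "Rs n = R \<or> lt (Rs n) R"
proof -
  have chain: "Rs m = Rs k \<or> lt (Rs m) (Rs k)" if "m \<le> k" for m k
    using that
  proof (induction k)
    case 0
    then show ?case by simp
  next
    case (Suc k)
    show ?case
    proof (cases "m = Suc k")
      case False
      then have "Rs m = Rs k \<or> lt (Rs m) (Rs k)"
        using Suc by simp
      then show ?thesis
        using mono[of k] trans by metis
    qed simp
  qed
  show ?thesis
  proof (rule ccontr)
    assume "\<not> (Rs n = R \<or> lt (Rs n) R)"
    then have "lt R (Rs n)"
      using total[OF Rs R] by blast
    then obtain N where "\<And>k. k \<ge> N \<Longrightarrow> lt (Rs k) (Rs n)"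
      using lim[OF Rs] unfolding eventually_sequentially by blast
    then have "lt (Rs (max n N)) (Rs n)"
      by simp
    moreover have "Rs n = Rs (max n N) \<or> lt (Rs n) (Rs (max n N))"
      using chain by simp
    ultimately show False
      using asym[OF Rs Rs] by metis
  qed
qed

lemma zle_components: "zle x y \<Longrightarrow> fst x \<le> fst y \<and> snd x \<le> snd y"
  by (auto simp: zle_def zless_def)

lemma zle_incseq_convergent:
  assumes inc: "\<And>n. zle (zs n) (zs (Suc n))" and bound: "\<And>n. zle (zs n) z"
  obtains L where "zs \<longlonglongrightarrow> L"
proof -
  have "incseq (\<lambda>n. fst (zs n))" "incseq (\<lambda>n. snd (zs n))"
    using zle_components[OF inc] by (auto intro: incseq_SucI)
  moreover have "\<forall>n. fst (zs n) \<le> fst z" "\<forall>n. snd (zs n) \<le> snd z"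
    using zle_components[OF bound] by auto
  ultimately obtain t q where "(\<lambda>n. fst (zs n)) \<longlonglongrightarrow> t" "(\<lambda>n. snd (zs n)) \<longlonglongrightarrow> q"
    using incseq_convergent by metis
  then have "zs \<longlonglongrightarrow> (t, q)"
    using tendsto_Pair by fastforce
  then show thesis
    using that by blast
qed

lemma zle_decseq_convergent:
  assumes dec: "\<And>n. zle (zs (Suc n)) (zs n)" and bound: "\<And>n. zle z (zs n)"
  obtains L where "zs \<longlonglongrightarrow> L"
proof -
  have "decseq (\<lambda>n. fst (zs n))" "decseq (\<lambda>n. snd (zs n))"
    using zle_components[OF dec] by (auto intro: decseq_SucI)
  moreover have "\<forall>n. fst z \<le> fst (zs n)" "\<forall>n. snd z \<le> snd (zs n)"
    using zle_components[OF bound] by auto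
  ultimately obtain t q where "(\<lambda>n. fst (zs n)) \<longlonglongrightarrow> t" "(\<lambda>n. snd (zs n)) \<longlonglongrightarrow> q"
    using decseq_convergent by metis
  then have "zs \<longlonglongrightarrow> (t, q)"
    using tendsto_Pair by fastforce
  then show thesis
    using that by blast
qed


section \<open>Continuity of the indirect preference correspondence\<close>

lemma exists_near_dominating_below:
  assumes L: "L \<in> Zset" and z: "z \<in> Zset" and le: "fst L \<le> fst z" and lt: "snd L < snd z"
    and pos: "0 < fst z" and e: "e > 0"
  obtains w where "w \<in> Zset" "zless w z" "dist w L < e" "fst w \<le> fst L" "snd L < snd w"
proof -
  obtain d where d: "0 < d" "d < e / 2" "d < snd z - snd L"
    using field_lbound_gt_zero[of "e / 2" "snd z - snd L"] e lt by auto
  define w where "w = (max 0 (fst L - d), snd L + d)"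
  have "w \<in> Zset"
    using L z d by (simp add: w_def Zset_iff)
  moreover have "zless w z"
    using le pos d by (simp add: w_def zless_def)
  moreover have "dist w L < e"
  proof -
    have "dist (max 0 (fst L - d)) (fst L) \<le> d"
      using L d(1) by (auto simp: dist_real_def Zset_iff)
    moreover have "dist (snd L + d) (snd L) = d"
      using d(1) by (simp add: dist_real_def)
    ultimately show ?thesis
      using dist_Pair_le[of "max 0 (fst L - d)" "snd L + d" "fst L" "snd L"] d(2) by (simp add: w_def)
  qed
  moreover have "fst w \<le> fst L" "snd L < snd w"
    using L d(1) by (simp_all add: w_def Zset_iff)
  ultimately show thesis
    using that by blast
qed

lemma exists_near_dominating_above:
  assumes L: "L \<in> Zset" and z: "z \<in> Zset" and lt: "fst z < fst L" and le: "snd z \<le> snd L"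
    and top: "snd z < 1" and e: "e > 0"
  obtains u where "u \<in> Zset" "zless z u" "dist u L < e" "fst u < fst L" "snd L < snd u \<or> snd u = 1"
proof -
  obtain d where d: "0 < d" "d < e / 2" "d < fst L - fst z"
    using field_lbound_gt_zero[of "e / 2" "fst L - fst z"] e lt by auto
  define u where "u = (fst L - d, min 1 (snd L + d))"
  have "u \<in> Zset"
    using L z d by (simp add: u_def Zset_iff)
  moreover have "zless z u"
    using le top d by (simp add: u_def zless_def)
  moreover have "dist u L < e"
  proof -
    have "dist (fst L - d) (fst L) = d"
      using d(1) by (simp add: dist_real_def)
    moreover have "dist (min 1 (snd L + d)) (snd L) \<le> d"
      using L d(1) by (auto simp: dist_real_def Zset_iff)
    ultimately show ?thesis
      using dist_Pair_le[of "fst L - d" "min 1 (snd L + d)" "fst L" "snd L"] d(2) by (simp add: u_def)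
  qed
  moreover have "fst u < fst L" "snd L < snd u \<or> snd u = 1"
    using d(1) by (auto simp: u_def)
  ultimately show thesis
    using that by blast
qed

lemma tendsto_exists_ne:
  fixes L z :: "'a::t2_space"
  assumes "xs \<longlonglongrightarrow> L" "L \<noteq> z"
  obtains n where "xs n \<noteq> z"
proof (rule ccontr)
  assume "\<not> thesis"
  then have "xs = (\<lambda>_. z)"
    using that by blast
  then show False
    using assms by (simp add: LIMSEQ_const_iff)
qed

lemma exists_dominating_strictly_worse_below:
  assumes R: "classical R" and L: "L \<in> Zset" and z: "z \<in> Zset"
    and le: "fst L \<le> fst z" "snd L \<le> snd z" and pos: "0 < fst z" and nL: "\<not> R L z"
  obtains w where "w \<in> Zset" "zless w z" "\<not> R w z" "fst w \<le> fst L" "snd L < snd w"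
proof -
  have "snd L < snd z"
    using le nL pref_if_dominates[OF R L z] by fastforce
  moreover obtain e where e: "e > 0" "\<And>x'. dist x' L < e \<Longrightarrow> \<not> R x' z"
    using not_pref_nhd[OF R nL] by (metis dist_self)
  ultimately obtain w where "w \<in> Zset" "zless w z" "dist w L < e" "fst w \<le> fst L" "snd L < snd w"
    using exists_near_dominating_below[OF L z le(1) _ pos] by blast
  then show thesis
    using that e(2) by blast
qed

lemma exists_dominating_strictly_worse_above:
  assumes R: "classical R" and L: "L \<in> Zset" and z: "z \<in> Zset"
    and ge: "fst z \<le> fst L" "snd z \<le> snd L" and top: "snd z < 1" and nL: "\<not> R L z"
  obtains u where "u \<in> Zset" "zless z u" "\<not> R u z" "fst u < fst L" "snd L < snd u \<or> snd u = 1"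
proof -
  have "fst z < fst L"
    using ge nL pref_if_dominates[OF R L z] by fastforce
  moreover obtain e where e: "e > 0" "\<And>x'. dist x' L < e \<Longrightarrow> \<not> R x' z"
    using not_pref_nhd[OF R nL] by (metis dist_self)
  ultimately obtain u where
    "u \<in> Zset" "zless z u" "dist u L < e" "fst u < fst L" "snd L < snd u \<or> snd u = 1"
    using exists_near_dominating_above[OF L z _ ge(2) top] by blast
  then show thesis
    using that e(2) by blast
qed

text \<open>Types Rs n approaching R from below, with bundles zs n \<le> z that Rs n weakly prefers to z:
  if R strictly preferred z to the limit L, a type a with a bundle w dominating L and
  a-indifferent to z (richness) would lie below R, hence eventually below Rs n, and then
  would weakly prefer L to z.\<close>
lemma limit_pref_from_below:
  assumes D: "rich_single_crossing D" and R: "R \<in> D" and Rs: "\<And>n. Rs n \<in> D"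
    and le: "\<And>n. zle (zs n) z" and pref: "\<And>n. Rs n (zs n) z" and lim: "zs \<longlonglongrightarrow> L"
    and ev: "\<And>a. a \<in> D \<Longrightarrow> prec a R \<Longrightarrow> eventually (\<lambda>n. prec a (Rs n)) sequentially"
  shows "R L z"
proof (rule ccontr)
  assume nL: "\<not> R L z"
  have clR: "classical R" and clRs: "\<And>n. classical (Rs n)"
    using rich_classical[OF D] R Rs by blast+
  have zsZ: "zs n \<in> Zset" and zZ: "z \<in> Zset" for n
    using classical_Zset[OF clRs pref] by blast+
  have LZ: "L \<in> Zset"
    using Lim_in_closed_set[OF closed_Zset _ _ lim] zsZ by simp
  have L_le: "fst L \<le> fst z" "snd L \<le> snd z"
    using LIMSEQ_le_const2[OF tendsto_fst[OF lim]] LIMSEQ_le_const2[OF tendsto_snd[OF lim]]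
      zle_components[OF le] by blast+
  have "L \<noteq> z"
    using nL classical_refl[OF clR zZ] by blast
  then obtain n where "zs n \<noteq> z"
    by (rule tendsto_exists_ne[OF lim])
  then have "0 < fst z"
    using le[of n] zsZ[of n] by (simp add: zle_def zless_def Zset_iff)
  then obtain w where w: "w \<in> Zset" "zless w z" "\<not> R w z" "fst w \<le> fst L" "snd L < snd w"
    using exists_dominating_strictly_worse_below[OF clR LZ zZ L_le _ nL] by blast
  obtain a where a: "a \<in> D" "indiff a w z"
    using D w(1,2) zZ unfolding rich_single_crossing_def by blast
  have cla: "classical a"
    using rich_classical[OF D a(1)] .
  have "\<not> prec R a"
    using prec_pref_smaller[OF cla _ _] w(2,3) a(2) unfolding zle_def indiff_def by blast
  moreover have "a \<noteq> R"
    using a(2) w(3) unfolding indiff_def by blast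
  ultimately have "eventually (\<lambda>n. prec a (Rs n)) sequentially"
    using ev[OF a(1)] rich_prec_total[OF D a(1) R] by blast
  then have "eventually (\<lambda>n. a (zs n) z) sequentially"
  proof (rule eventually_mono)
    fix n
    assume "prec a (Rs n)"
    then show "a (zs n) z"
      by (rule prec_pref_smaller[OF clRs _ le pref])
  qed
  then have "a L z"
    by (rule pref_tendsto[OF cla lim tendsto_const])
  then have "a L w"
    using classical_trans[OF cla] a(2) unfolding indiff_def by blast
  moreover have "strict a w L"
    using strict_if_dominates[OF cla w(1) LZ w(4)] w(5) by (auto simp: prod_eq_iff)
  ultimately show False
    unfolding strict_def by blast
qed

text \<open>The mirror image: a type a with a bundle u near L, above z and a-indifferent to it, must
  lie above R by the converse direction of \<prec>, hence eventually above Rs n; then Rs n would weakly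
  prefer z to u and so zs n to u, although u dominates zs n.\<close>
lemma limit_pref_from_above:
  assumes D: "rich_single_crossing D" and R: "R \<in> D" and Rs: "\<And>n. Rs n \<in> D"
    and ge: "\<And>n. zle z (zs n)" and dec: "\<And>n. zle (zs (Suc n)) (zs n)"
    and pref: "\<And>n. Rs n (zs n) z" and lim: "zs \<longlonglongrightarrow> L"
    and ev: "\<And>a. a \<in> D \<Longrightarrow> prec R a \<Longrightarrow> eventually (\<lambda>n. prec (Rs n) a) sequentially"
  shows "R L z"
proof (rule ccontr)
  assume nL: "\<not> R L z"
  have clR: "classical R" and clRs: "\<And>n. classical (Rs n)"
    using rich_classical[OF D] R Rs by blast+
  have zsZ: "zs n \<in> Zset" and zZ: "z \<in> Zset" for n
    using classical_Zset[OF clRs pref] by blast+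
  have LZ: "L \<in> Zset"
    using Lim_in_closed_set[OF closed_Zset _ _ lim] zsZ by simp
  have L_ge: "fst z \<le> fst L" "snd z \<le> snd L"
    using LIMSEQ_le_const[OF tendsto_fst[OF lim]] LIMSEQ_le_const[OF tendsto_snd[OF lim]]
      zle_components[OF ge] by blast+
  have L_le: "fst L \<le> fst (zs n)" for n
    using decseq_ge[OF _ tendsto_fst[OF lim]] zle_components[OF dec] by (simp add: decseq_Suc_iff)
  have "L \<noteq> z"
    using nL classical_refl[OF clR zZ] by blast
  then obtain n where "zs n \<noteq> z"
    by (rule tendsto_exists_ne[OF lim])
  then have "snd z < 1"
    using ge[of n] zsZ[of n] by (auto simp: zle_def zless_def Zset_iff)
  then obtain u where u: "u \<in> Zset" "zless z u" "\<not> R u z" "fst u < fst L" "snd L < snd u \<or> snd u = 1"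
    using exists_dominating_strictly_worse_above[OF clR LZ zZ L_ge _ nL] by blast
  obtain a where a: "a \<in> D" "indiff a z u"
    using D u(1,2) zZ unfolding rich_single_crossing_def by blast
  have cla: "classical a"
    using rich_classical[OF D a(1)] .
  have "\<not> prec a R"
    using prec_pref_larger[OF cla clR _ u(2)] a(2) u(3) unfolding indiff_def by blast
  moreover have "a \<noteq> R"
    using a(2) u(3) unfolding indiff_def by blast
  ultimately have "eventually (\<lambda>n. prec (Rs n) a) sequentially"
    using ev[OF a(1)] rich_prec_total[OF D a(1) R] by blast
  moreover have "eventually (\<lambda>n. snd (zs n) \<le> snd u) sequentially"
    using u(5)
  proof
    assume "snd L < snd u"
    then have "eventually (\<lambda>n. snd (zs n) < snd u) sequentially"
      by (rule order_tendstoD(2)[OF tendsto_snd[OF lim]])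
    then show ?thesis
      by (rule eventually_mono) simp
  next
    assume "snd u = 1"
    then show ?thesis
      using zsZ by (simp add: Zset_iff)
  qed
  ultimately obtain n where n: "prec (Rs n) a" "snd (zs n) \<le> snd u"
    using eventually_happens'[OF trivial_limit_sequentially eventually_conj] by blast
  have "Rs n (zs n) u"
    using prec_pref_smaller[OF cla n(1)] u(2) a(2) classical_trans[OF clRs pref]
    unfolding zle_def indiff_def by blast
  moreover have "strict (Rs n) u (zs n)"
    using strict_if_dominates[OF clRs u(1) zsZ] u(4) L_le[of n] n(2) by (auto simp: prod_eq_iff)
  ultimately show False
    unfolding strict_def by blast
qed

lemma limit_eventually_prec:
  assumes ED: "E \<subseteq> D" and lim: "limitin (subtopology (order_top D) E) Rs R sequentially"
    and R: "R \<in> E" and a: "a \<in> D"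
  shows "prec R a \<Longrightarrow> eventually (\<lambda>n. prec (Rs n) a) sequentially"
    and "prec a R \<Longrightarrow> eventually (\<lambda>n. prec a (Rs n)) sequentially"
proof -
  have RD: "R \<in> D"
    using ED R by blast
  show "eventually (\<lambda>n. prec (Rs n) a) sequentially" if "prec R a"
  proof -
    have "eventually (\<lambda>n. Rs n \<in> {S \<in> D. prec S a}) sequentially"
      by (rule limitin_order_top_eventually[OF lim openin_order_top_rays(1)[OF a]]) (use RD that in simp)
    then show ?thesis
      by (rule eventually_mono) simp
  qed
  show "eventually (\<lambda>n. prec a (Rs n)) sequentially" if "prec a R"
  proof -
    have "eventually (\<lambda>n. Rs n \<in> {S \<in> D. prec a S}) sequentially"
      by (rule limitin_order_top_eventually[OF lim openin_order_top_rays(2)[OF a]]) (use RD that in simp)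
    then show ?thesis
      by (rule eventually_mono) simp
  qed
qed

lemma tendsto_outcomes_increasing_types:
  assumes D: "rich_single_crossing D" and ED: "E \<subseteq> D" and sp: "strategy_proof E F"
    and R: "R \<in> E" and Rs: "\<And>n. Rs n \<in> E" and up: "\<And>n. preceq (Rs n) (Rs (Suc n))"
    and lim: "limitin (subtopology (order_top D) E) Rs R sequentially"
  shows "\<exists>L. (\<lambda>n. F (Rs n)) \<longlonglongrightarrow> L \<and> R L (F R)"
proof -
  have RD: "R \<in> D" and RsD: "\<And>n. Rs n \<in> D"
    using ED R Rs by blast+
  have mono: "Rs n = Rs (Suc n) \<or> prec (Rs n) (Rs (Suc n))" for n
    using up[of n] unfolding preceq_def by blast
  have "Rs n = R \<or> prec (Rs n) R" for n
    by (rule monotone_seq_side_of_limit[where lt = prec, OF rich_prec_total[OF D]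
          rich_prec_asym[OF D] prec_trans RsD RD mono limit_eventually_prec(1)[OF ED lim R]])
  then have below: "preceq (Rs n) R" for n
    unfolding preceq_def by blast
  have le: "zle (F (Rs n)) (F R)" for n
    using strategy_proof_outcomes_zle[OF D ED sp Rs R below] .
  have inc: "zle (F (Rs n)) (F (Rs (Suc n)))" for n
    using strategy_proof_outcomes_zle[OF D ED sp Rs Rs up] .
  obtain L where L: "(\<lambda>n. F (Rs n)) \<longlonglongrightarrow> L"
    using zle_incseq_convergent[where zs = "\<lambda>n. F (Rs n)", OF inc le] by blast
  moreover have "Rs n (F (Rs n)) (F R)" for n
    using sp R Rs unfolding strategy_proof_def by blast
  then have "R L (F R)"
    using limit_pref_from_below[OF D RD RsD le _ L limit_eventually_prec(2)[OF ED lim R]] by blast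
  ultimately show ?thesis
    by blast
qed

lemma tendsto_outcomes_decreasing_types:
  assumes D: "rich_single_crossing D" and ED: "E \<subseteq> D" and sp: "strategy_proof E F"
    and R: "R \<in> E" and Rs: "\<And>n. Rs n \<in> E" and down: "\<And>n. preceq (Rs (Suc n)) (Rs n)"
    and lim: "limitin (subtopology (order_top D) E) Rs R sequentially"
  shows "\<exists>L. (\<lambda>n. F (Rs n)) \<longlonglongrightarrow> L \<and> R L (F R)"
proof -
  have RD: "R \<in> D" and RsD: "\<And>n. Rs n \<in> D"
    using ED R Rs by blast+
  have mono: "Rs n = Rs (Suc n) \<or> prec (Rs (Suc n)) (Rs n)" for n
    using down[of n] unfolding preceq_def by auto
  have total: "prec b a \<or> prec a b" if "a \<in> D" "b \<in> D" "a \<noteq> b" for a b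
    using rich_prec_total[OF D that] by blast
  have asym: "\<not> prec a b" if "a \<in> D" "b \<in> D" "prec b a" for a b
    using rich_prec_asym[OF D that(2,1,3)] .
  have trans: "prec c a" if "prec b a" "prec c b" "a \<noteq> c" for a b c
    using prec_trans[OF that(2,1)] that(3) by blast
  have side: "Rs n = R \<or> prec R (Rs n)" for n
    by (rule monotone_seq_side_of_limit[where lt = "\<lambda>a b. prec b a", OF total asym trans RsD RD mono
          limit_eventually_prec(2)[OF ED lim R]])
  have above: "preceq R (Rs n)" for n
    using side[of n] unfolding preceq_def by auto
  have ge: "zle (F R) (F (Rs n))" for n
    using strategy_proof_outcomes_zle[OF D ED sp R Rs above] .
  have dec: "zle (F (Rs (Suc n))) (F (Rs n))" for n
    using strategy_proof_outcomes_zle[OF D ED sp Rs Rs down] .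
  obtain L where L: "(\<lambda>n. F (Rs n)) \<longlonglongrightarrow> L"
    using zle_decseq_convergent[where zs = "\<lambda>n. F (Rs n)", OF dec ge] by blast
  moreover have "Rs n (F (Rs n)) (F R)" for n
    using sp R Rs unfolding strategy_proof_def by blast
  then have "R L (F R)"
    using limit_pref_from_above[OF D RD RsD ge dec _ L limit_eventually_prec(1)[OF ED lim R]] by blast
  ultimately show ?thesis
    by blast
qed

text \<open>Strategy-proofness alone puts every outcome into Zset.\<close>
lemma V_continuous_if_strategy_proof:
  assumes D: "rich_single_crossing D" and ED: "E \<subseteq> D" and sp: "strategy_proof E F"
  shows "V_continuous D E F"
  unfolding V_continuous_def
proof (intro ballI allI impI)
  fix R Rs
  assume R: "R \<in> E" and Rs: "\<forall>n. Rs n \<in> E" and mono: "monotone_seq Rs"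
    and lim: "limitin (subtopology (order_top D) E) Rs R sequentially"
  have "\<exists>L. (\<lambda>n. F (Rs n)) \<longlonglongrightarrow> L \<and> R L (F R)"
    using mono unfolding monotone_seq_def
  proof
    assume "\<forall>n. preceq (Rs n) (Rs (Suc n))"
    then show ?thesis
      using tendsto_outcomes_increasing_types[OF D ED sp R _ _ lim] Rs by blast
  next
    assume "\<forall>n. preceq (Rs (Suc n)) (Rs n)"
    then show ?thesis
      using tendsto_outcomes_decreasing_types[OF D ED sp R _ _ lim] Rs by blast
  qed
  then obtain L where L: "(\<lambda>n. F (Rs n)) \<longlonglongrightarrow> L" "R L (F R)"
    by blast
  have clR: "classical R"
    using rich_classical[OF D] ED R by blast
  have "\<forall>n. R (F R) (F (Rs n))"
    using sp R Rs unfolding strategy_proof_def by blast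
  then have "eventually (\<lambda>n. R (F R) (F (Rs n))) sequentially"
    by (simp add: always_eventually)
  then have "R (F R) L"
    by (rule pref_tendsto[OF clR tendsto_const L(1)])
  then have "L \<in> indirect_pref F R"
    using L(2) classical_Zset[OF clR] unfolding indirect_pref_def indiff_def by blast
  with L(1) show "\<exists>L. ((\<lambda>n. F (Rs n)) \<longlongrightarrow> L) sequentially \<and> L \<in> indirect_pref F R"
    by blast
qed

theorem mainTheorem6:
  fixes D :: "pref set"
  assumes "rich_single_crossing D"
  shows "(\<forall>F. mechanism D F \<longrightarrow> strategy_proof D F \<longrightarrow> V_continuous D D F) \<and>
         (\<forall>Rlo\<in>D. \<forall>Rhi\<in>D. preceq Rlo Rhi \<longrightarrow>
            (\<forall>F. mechanism (interval D Rlo Rhi) F \<longrightarrow> strategy_proof (interval D Rlo Rhi) F \<longrightarrow>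
                 V_continuous D (interval D Rlo Rhi) F))"
proof (intro conjI allI ballI impI)
  fix F
  assume "strategy_proof D F"
  then show "V_continuous D D F"
    by (rule V_continuous_if_strategy_proof[OF assms order_refl])
next
  fix Rlo Rhi F
  assume "strategy_proof (interval D Rlo Rhi) F"
  moreover have "interval D Rlo Rhi \<subseteq> D"
    unfolding interval_def by blast
  ultimately show "V_continuous D (interval D Rlo Rhi) F"
    using V_continuous_if_strategy_proof[OF assms] by blast
qed

end
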